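(* If $M,M'\in\mathrm{Mat}(2,\mathbb{Z})$ are conjugate via a matrix in $\mathrm{GL}(2,\mathbb{Z})$, then $\mathrm{mgcd}(M')=\mathrm{mgcd}(M)$. In particular, the matrix gcd is constant on the conjugacy classes of $\mathrm{GL}(2,\mathbb{Z})$.
   Context: For $M=\begin{pmatrix}a&b\\c&d\end{pmatrix}\in\mathrm{Mat}(2,\mathbb{Z})$, the matrix gcd is $\mathrm{mgcd}(M)=\gcd(b,c,d-a)$, taken as a non-negative integer, with $\mathrm{mgcd}(M)=0$ when $b=c=d-a=0$. *)

theory Defs
  imports "HOL-Analysis.Analysis"
begin

text \<open>2x2 integer matrices are rendered as int^2^2; entries M $ 1 $ 1 = a, M $ 1 $ 2 = b,
  M $ 2 $ 1 = c, M $ 2 $ 2 = d.\<close>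

definition mgcd :: "int^2^2 \<Rightarrow> int" where
  "mgcd M = gcd (gcd (M $ 1 $ 2) (M $ 2 $ 1)) (M $ 2 $ 2 - M $ 1 $ 1)"

definition GL2Z :: "(int^2^2) set" where
  "GL2Z = {P. \<exists>Q::int^2^2. P ** Q = mat 1 \<and> Q ** P = mat 1}"

definition conj_GL2Z :: "int^2^2 \<Rightarrow> int^2^2 \<Rightarrow> bool" where
  "conj_GL2Z M M' \<longleftrightarrow> (\<exists>P\<in>GL2Z. \<exists>Q. P ** Q = mat 1 \<and> Q ** P = mat 1 \<and> M' = P ** M ** Q)"

end

theory Submission
  imports Defs
begin

text \<open>The matrix gcd is the largest g such that M is congruent modulo g to a scalar matrix.
  Conjugation fixes scalar matrices and preserves divisibility of all entries by g, so
  mgcd M divides mgcd M' and, by symmetry, conversely; both are non-negative.\<close>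

lemma matrix_diff_ldistrib:
  fixes A B C :: "'a::ring_1^'n^'n"
  shows "A ** (B - C) = A ** B - A ** C"
  by (simp add: matrix_matrix_mult_def vec_eq_iff right_diff_distrib sum_subtractf)

lemma matrix_diff_rdistrib:
  fixes A B C :: "'a::ring_1^'n^'n"
  shows "(B - C) ** A = B ** A - C ** A"
  by (simp add: matrix_matrix_mult_def vec_eq_iff left_diff_distrib sum_subtractf)

lemma mat_mult_commute:
  fixes A :: "'a::comm_semiring_1^'n^'n"
  shows "mat k ** A = A ** mat k"
  by (simp add: matrix_matrix_mult_def mat_def vec_eq_iff if_distrib if_distribR
      sum.delta sum.delta' mult.commute cong: if_cong)

lemma conj_diff_mat:
  fixes P Q M :: "'a::comm_ring_1^'n^'n"
  assumes "P ** Q = mat 1"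
  shows "P ** (M - mat k) ** Q = P ** M ** Q - mat k"
proof -
  have "P ** mat k ** Q = mat k ** (P ** Q)"
    by (simp add: mat_mult_commute matrix_mul_assoc)
  then show ?thesis
    using assms by (simp add: matrix_diff_ldistrib matrix_diff_rdistrib)
qed

lemma dvd_matrix_mult_entries:
  fixes A N :: "'a::comm_semiring_1^'n^'n"
  assumes "\<And>i j. g dvd N $ i $ j"
  shows "g dvd (A ** N) $ i $ j" and "g dvd (N ** A) $ i $ j"
  by (simp_all add: matrix_matrix_mult_def assms dvd_sum)

lemma dvd_mgcd_iff: "g dvd mgcd M \<longleftrightarrow> (\<exists>k. \<forall>i j. g dvd (M - mat k) $ i $ j)"
proof
  assume "g dvd mgcd M"
  then have "g dvd M $ 1 $ 2" "g dvd M $ 2 $ 1" "g dvd M $ 2 $ 2 - M $ 1 $ 1"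
    by (auto simp: mgcd_def intro: dvd_trans)
  then have "\<forall>i j. g dvd (M - mat (M $ 1 $ 1)) $ i $ j"
    by (auto simp: mat_def forall_2)
  then show "\<exists>k. \<forall>i j. g dvd (M - mat k) $ i $ j" ..
next
  assume "\<exists>k. \<forall>i j. g dvd (M - mat k) $ i $ j"
  then obtain k where "\<And>i j. g dvd (M - mat k) $ i $ j" by blast
  from this[of 1 2] this[of 2 1] this[of 2 2] this[of 1 1]
  have entries: "g dvd M $ 1 $ 2" "g dvd M $ 2 $ 1" "g dvd M $ 2 $ 2 - k" "g dvd M $ 1 $ 1 - k"
    by (simp_all add: mat_def)
  then have "g dvd (M $ 2 $ 2 - k) - (M $ 1 $ 1 - k)"
    using dvd_diff by blast
  with entries show "g dvd mgcd M"
    by (simp add: mgcd_def)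
qed

lemma mgcd_dvd_mgcd_conj:
  assumes "P ** Q = mat 1"
  shows "mgcd M dvd mgcd (P ** M ** Q)"
proof -
  obtain k where "\<And>i j. mgcd M dvd (M - mat k) $ i $ j"
    using dvd_mgcd_iff[of "mgcd M" M] by auto
  then have "\<And>i j. mgcd M dvd (P ** (M - mat k) ** Q) $ i $ j"
    by (intro dvd_matrix_mult_entries)
  then show ?thesis
    unfolding dvd_mgcd_iff conj_diff_mat[OF assms] by blast
qed

theorem lemma29:
  fixes M M' :: "int^2^2"
  assumes "conj_GL2Z M M'"
  shows "mgcd M' = mgcd M"
proof -
  obtain P Q where PQ: "P ** Q = mat 1" "Q ** P = mat 1" and M': "M' = P ** M ** Q"
    using assms unfolding conj_GL2Z_def by blast
  have "M = Q ** M' ** P"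
    by (simp add: M' matrix_mul_assoc PQ(2)) (simp add: matrix_mul_assoc[symmetric] PQ(2))
  then have "mgcd M' dvd mgcd M"
    using mgcd_dvd_mgcd_conj[OF PQ(2), of M'] by simp
  moreover have "mgcd M dvd mgcd M'"
    using mgcd_dvd_mgcd_conj[OF PQ(1), of M] M' by simp
  ultimately show ?thesis
    by (simp add: mgcd_def zdvd_antisym_nonneg)
qed

end
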